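(* Let $A=(A_1,\dots,A_d)$ take values in $\{0,1\}^d$ with probabilities $p(a)>0$ for all $a$. For $b\in\{0,1\}^d$ define the linear interactions $\xi_b=\sum_{a\in\{0,1\}^d}(-1)^{a\cdot b}p(a)$ and the log-linear interactions $\lambda_b=2^{-d}\sum_{a\in\{0,1\}^d}(-1)^{a\cdot b}\log p(a)$, where $a\cdot b=\sum_v a_vb_v$. Then the following are equivalent: (1) $p$ is palindromic, i.e. $p(a)=p(\sim a)$ for all $a$; (2) $\xi_b=0$ for all $b$ with $|b|$ odd; (3) $\lambda_b=0$ for all $b$ with $|b|$ odd.
   Context: $\sim a$ denotes the complement of the binary vector $a$ ($(\sim a)_v=1-a_v$). For $b\in\{0,1\}^d$, $|b|=\sum_v b_v$ is its order; a vector $b$ is identified with the subset $\{v: b_v=1\}$ of $\{1,\dots,d\}$, and the interaction indexed by $b$ is called of odd or even order according to the parity of $|b|$. *)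

theory Defs
  imports Complex_Main
begin

text \<open>Binary vectors in {0,1}^d, coordinates indexed by 1..d, represented as
  functions nat => nat that are 0 outside {1..d}.\<close>
definition cube :: "nat \<Rightarrow> (nat \<Rightarrow> nat) set" where
  "cube d = {a. (\<forall>v\<in>{1..d}. a v \<in> {0,1}) \<and> (\<forall>v. v \<notin> {1..d} \<longrightarrow> a v = 0)}"

definition compl_vec :: "nat \<Rightarrow> (nat \<Rightarrow> nat) \<Rightarrow> (nat \<Rightarrow> nat)" where
  "compl_vec d a = (\<lambda>v. if v \<in> {1..d} then 1 - a v else 0)"

definition dot :: "nat \<Rightarrow> (nat \<Rightarrow> nat) \<Rightarrow> (nat \<Rightarrow> nat) \<Rightarrow> nat" where
  "dot d a b = (\<Sum>v=1..d. a v * b v)"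

definition order :: "nat \<Rightarrow> (nat \<Rightarrow> nat) \<Rightarrow> nat" where
  "order d b = (\<Sum>v=1..d. b v)"

definition palindromic :: "nat \<Rightarrow> ((nat \<Rightarrow> nat) \<Rightarrow> real) \<Rightarrow> bool" where
  "palindromic d p \<longleftrightarrow> (\<forall>a\<in>cube d. p a = p (compl_vec d a))"

definition linear_interaction :: "nat \<Rightarrow> ((nat \<Rightarrow> nat) \<Rightarrow> real) \<Rightarrow> (nat \<Rightarrow> nat) \<Rightarrow> real" where
  "linear_interaction d p b = (\<Sum>a\<in>cube d. (-1) ^ dot d a b * p a)"

definition loglinear_interaction :: "nat \<Rightarrow> ((nat \<Rightarrow> nat) \<Rightarrow> real) \<Rightarrow> (nat \<Rightarrow> nat) \<Rightarrow> real" where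
  "loglinear_interaction d p b = (1 / 2 ^ d) * (\<Sum>a\<in>cube d. (-1) ^ dot d a b * ln (p a))"

end

theory Submission
  imports Defs
begin

text \<open>Both interaction vectors are Walsh--Hadamard transforms, of \<open>p\<close> and of \<open>ln \<circ> p\<close>.
  Replacing a function \<open>f\<close> by \<open>f \<circ> compl\<close> multiplies its \<open>b\<close>-th coefficient by
  \<open>(-1)^|b|\<close>, since \<open>(\<sim>a)\<cdot>b + a\<cdot>b = |b|\<close>. Hence the coefficients of \<open>f - f \<circ> compl\<close> are
  \<open>2\<close> times those of \<open>f\<close> at odd \<open>b\<close> and \<open>0\<close> at even \<open>b\<close>, and since the transform is
  injective (its characters are orthogonal) \<open>f\<close> is palindromic exactly when its odd
  coefficients vanish. As \<open>ln\<close> is injective on positive reals, \<open>p\<close> is palindromic iff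
  \<open>ln \<circ> p\<close> is.\<close>

definition walsh :: "nat \<Rightarrow> ((nat \<Rightarrow> nat) \<Rightarrow> real) \<Rightarrow> (nat \<Rightarrow> nat) \<Rightarrow> real" where
  "walsh d f b = (\<Sum>a\<in>cube d. (-1) ^ dot d a b * f a)"

lemma finite_cube: "finite (cube d)"
proof -
  have "cube d \<subseteq> (\<lambda>S v. if v \<in> S then 1 else 0) ` Pow {1..d}"
  proof
    fix a assume a: "a \<in> cube d"
    have "a = (\<lambda>v. if v \<in> {v\<in>{1..d}. a v = 1} then 1 else 0)"
      using a unfolding cube_def by (intro ext) auto
    thus "a \<in> (\<lambda>S v. if v \<in> S then 1 else 0) ` Pow {1..d}" by blast
  qed
  thus ?thesis by (rule finite_subset) auto
qed

lemma card_cube_pos: "card (cube d) > 0"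
proof -
  have "(\<lambda>_. 0) \<in> cube d" by (auto simp: cube_def)
  thus ?thesis using finite_cube card_gt_0_iff by blast
qed

lemma cube_coord_cases:
  assumes "a \<in> cube d" "v \<in> {1..d}"
  obtains "a v = 0" | "a v = 1"
proof -
  have "a v \<in> {0, 1}" using assms by (auto simp: cube_def)
  then show ?thesis using that by auto
qed

lemma compl_vec_in_cube: "a \<in> cube d \<Longrightarrow> compl_vec d a \<in> cube d"
  by (auto simp: cube_def compl_vec_def)

lemma compl_vec_compl_vec:
  assumes "a \<in> cube d"
  shows "compl_vec d (compl_vec d a) = a"
proof
  fix v
  show "compl_vec d (compl_vec d a) v = a v"
  proof (cases "v \<in> {1..d}")
    case True
    show ?thesis by (rule cube_coord_cases[OF assms True]) (use True in \<open>simp_all add: compl_vec_def\<close>)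
  qed (use assms in \<open>auto simp: compl_vec_def cube_def\<close>)
qed

lemma dot_compl_vec: "a \<in> cube d \<Longrightarrow> dot d (compl_vec d a) b + dot d a b = order d b"
  unfolding dot_def order_def sum.distrib[symmetric]
  by (rule sum.cong) (auto simp: compl_vec_def elim: cube_coord_cases)

lemma sign_dot_compl_vec:
  assumes "a \<in> cube d"
  shows "(-1::real) ^ dot d (compl_vec d a) b = (-1) ^ order d b * (-1) ^ dot d a b"
proof -
  have "(-1::real) ^ order d b * (-1) ^ dot d a b
      = (-1) ^ dot d (compl_vec d a) b * ((-1) ^ dot d a b) ^ 2"
    by (simp flip: dot_compl_vec[OF assms, of b] add: power_add power2_eq_square)
  thus ?thesis by (simp flip: power_mult)
qed

lemma walsh_compl_vec:
  "walsh d (\<lambda>a. f (compl_vec d a)) b = (-1) ^ order d b * walsh d f b"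
proof -
  have "walsh d (\<lambda>a. f (compl_vec d a)) b
      = (\<Sum>a\<in>cube d. (-1) ^ dot d (compl_vec d a) b * f a)"
    unfolding walsh_def
    by (rule sum.reindex_bij_witness[where i="compl_vec d" and j="compl_vec d"])
       (auto simp: compl_vec_in_cube compl_vec_compl_vec)
  also have "\<dots> = (\<Sum>a\<in>cube d. (-1) ^ order d b * ((-1) ^ dot d a b * f a))"
    by (rule sum.cong) (auto simp: sign_dot_compl_vec)
  finally show ?thesis by (simp add: walsh_def sum_distrib_left)
qed

lemma sign_dot_flip:
  assumes a: "a \<in> cube d" and b: "b \<in> cube d" and v: "v \<in> {1..d}"
  shows "(-1::real) ^ dot d a (b(v := 1 - b v)) = (-1) ^ a v * (-1) ^ dot d a b"
proof -
  define r where "r = (\<Sum>w\<in>{1..d}-{v}. a w * b w)"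
  have "dot d a (b(v := 1 - b v)) = a v * (1 - b v) + r"
    "dot d a b = a v * b v + r"
    unfolding dot_def r_def using v by (auto simp: sum.remove intro!: sum.cong)
  then show ?thesis
    using a b v by (auto simp: power_add elim!: cube_coord_cases)
qed

lemma sum_characters_orthogonal:
  assumes a: "a \<in> cube d" and c: "c \<in> cube d" and "a \<noteq> c"
  shows "(\<Sum>b\<in>cube d. (-1::real) ^ dot d a b * (-1) ^ dot d c b) = 0"
proof -
  obtain v where "a v \<noteq> c v" using \<open>a \<noteq> c\<close> by auto
  then have v: "v \<in> {1..d}"
    by (rule contrapos_np) (use a c in \<open>auto simp: cube_def\<close>)
  with a c \<open>a v \<noteq> c v\<close> have odd_av_cv: "(-1::real) ^ a v * (-1) ^ c v = -1"
    by (auto elim!: cube_coord_cases)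
  define flip where "flip b = b(v := 1 - b v)" for b :: "nat \<Rightarrow> nat"
  have flip_in: "b \<in> cube d \<Longrightarrow> flip b \<in> cube d" for b
    using v by (auto simp: cube_def flip_def)
  have flip_flip: "flip (flip b) = b" if "b \<in> cube d" for b
    by (rule cube_coord_cases[OF that v]) (auto simp: flip_def)
  let ?q = "\<lambda>b. (-1::real) ^ dot d a b * (-1) ^ dot d c b"
  have "(\<Sum>b\<in>cube d. ?q b) = (\<Sum>b\<in>cube d. ?q (flip b))"
    by (rule sum.reindex_bij_witness[where i=flip and j=flip])
       (auto simp: flip_in flip_flip)
  also have "\<dots> = (\<Sum>b\<in>cube d. - ?q b)"
  proof (rule sum.cong)
    fix b assume b: "b \<in> cube d"
    have "?q (flip b) = ((-1) ^ a v * (-1) ^ c v) * ?q b"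
      unfolding flip_def sign_dot_flip[OF a b v] sign_dot_flip[OF c b v]
      by (simp only: ac_simps)
    then show "?q (flip b) = - ?q b" by (simp add: odd_av_cv)
  qed simp
  finally show ?thesis by (simp add: sum_negf)
qed

lemma walsh_injective:
  assumes zero: "\<forall>b\<in>cube d. walsh d g b = 0" and a: "a \<in> cube d"
  shows "g a = 0"
proof -
  have "0 = (\<Sum>b\<in>cube d. (-1::real) ^ dot d a b * walsh d g b)"
    using zero by simp
  also have "\<dots> = (\<Sum>c\<in>cube d. g c * (\<Sum>b\<in>cube d. (-1::real) ^ dot d a b * (-1) ^ dot d c b))"
    unfolding walsh_def sum_distrib_left
    by (subst sum.swap) (simp add: algebra_simps)
  also have "\<dots> = (\<Sum>c\<in>cube d. if c = a then g a * real (card (cube d)) else 0)"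
    using a by (intro sum.cong) (auto simp: sum_characters_orthogonal power_mult_distrib[symmetric])
  also have "\<dots> = g a * real (card (cube d))"
    using a finite_cube by simp
  finally show ?thesis using card_cube_pos[of d] by simp
qed

lemma symmetric_iff_walsh_odd_vanish:
  "(\<forall>a\<in>cube d. f a = f (compl_vec d a)) \<longleftrightarrow>
   (\<forall>b\<in>cube d. odd (order d b) \<longrightarrow> walsh d f b = 0)"
proof -
  have antisym_part: "walsh d (\<lambda>a. f a - f (compl_vec d a)) b
      = (1 - (-1) ^ order d b) * walsh d f b" for b
    using walsh_compl_vec[of d f b]
    by (simp add: walsh_def sum_subtractf right_diff_distrib left_diff_distrib)
  show ?thesis
  proof (intro iffI ballI impI)
    fix b assume "\<forall>a\<in>cube d. f a = f (compl_vec d a)" and "odd (order d b)"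
    then have "walsh d (\<lambda>a. f a - f (compl_vec d a)) b = 0"
      by (simp add: walsh_def)
    with \<open>odd (order d b)\<close> show "walsh d f b = 0"
      by (simp add: antisym_part)
  next
    assume odd_vanish: "\<forall>b\<in>cube d. odd (order d b) \<longrightarrow> walsh d f b = 0"
    have "walsh d (\<lambda>a. f a - f (compl_vec d a)) b = 0" if "b \<in> cube d" for b
      using odd_vanish that by (cases "even (order d b)") (simp_all add: antisym_part)
    then show "f a = f (compl_vec d a)" if "a \<in> cube d" for a
      using walsh_injective[of d "\<lambda>a. f a - f (compl_vec d a)" a] that by simp
  qed
qed

theorem proposition2p2:
  fixes d :: nat and p :: "(nat \<Rightarrow> nat) \<Rightarrow> real"
  assumes pos: "\<forall>a\<in>cube d. p a > 0"
    and sum1: "(\<Sum>a\<in>cube d. p a) = 1"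
  shows "(palindromic d p \<longleftrightarrow>
           (\<forall>b\<in>cube d. odd (order d b) \<longrightarrow> linear_interaction d p b = 0))
       \<and> (palindromic d p \<longleftrightarrow>
           (\<forall>b\<in>cube d. odd (order d b) \<longrightarrow> loglinear_interaction d p b = 0))"
proof
  show "palindromic d p \<longleftrightarrow>
          (\<forall>b\<in>cube d. odd (order d b) \<longrightarrow> linear_interaction d p b = 0)"
    unfolding palindromic_def linear_interaction_def
    by (rule symmetric_iff_walsh_odd_vanish[unfolded walsh_def])
  have "palindromic d p \<longleftrightarrow> (\<forall>a\<in>cube d. ln (p a) = ln (p (compl_vec d a)))"
    unfolding palindromic_def using pos compl_vec_in_cube by (auto simp: ln_inj_iff)
  also have "\<dots> \<longleftrightarrow> (\<forall>b\<in>cube d. odd (order d b) \<longrightarrow> walsh d (\<lambda>a. ln (p a)) b = 0)"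
    by (rule symmetric_iff_walsh_odd_vanish)
  also have "\<dots> \<longleftrightarrow> (\<forall>b\<in>cube d. odd (order d b) \<longrightarrow> loglinear_interaction d p b = 0)"
    by (simp add: loglinear_interaction_def walsh_def)
  finally show "palindromic d p \<longleftrightarrow>
          (\<forall>b\<in>cube d. odd (order d b) \<longrightarrow> loglinear_interaction d p b = 0)" .
qed

end
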